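(* Let $(X,\rho)$ be a metric space, $f:X\to X$ continuous, $x\in X$, $\ell\in\mathbb N$, $n\ge2$ an integer and $\varepsilon>0$. Then \[ \Lambda_\ell(x,n,\varepsilon)=\frac{n}{n-1}\Big[C_\ell(x,n,\varepsilon)-C_{\ell+1}(x,n,\varepsilon)\Big]+\delta^{N}_\ell,\qquad |\delta^N_\ell|\le\frac{2\ell}{n}. \] Consequently, if $\Lambda_\ell(x,n,\varepsilon)>0$, then, with $\delta^{\mathrm{RR}}_\ell$ satisfying $|\delta^{\mathrm{RR}}_\ell|\le 2\ell(\ell-1)/n$, \[ \mathrm{L}_\ell(x,n,\varepsilon)=\frac{\frac{n}{n-1}\big[\ell C_\ell-(\ell-1)C_{\ell+1}\big]-\frac1{n-1}+\delta^{\mathrm{RR}}_\ell}{\frac{n}{n-1}\big[C_\ell-C_{\ell+1}\big]+\delta^N_\ell}, \] where $C_\ell=C_\ell(x,n,\varepsilon)$ and $C_{\ell+1}=C_{\ell+1}(x,n,\varepsilon)$.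
   Context: Bowen metric $\rho_\ell(y,z)=\max_{0\le i<\ell}\rho(f^iy,f^iz)$; correlation sum $C_\ell(x,n,\varepsilon)=n^{-2}\#\{(i,j):0\le i,j<n,\ \rho_\ell(f^ix,f^jx)\le\varepsilon\}$. Recurrence plot $R(x,n,\varepsilon)$: $n\times n$ matrix ($0\le i,j<n$) with entry $1$ iff $\rho(f^ix,f^jx)\le\varepsilon$. A line of length $\ell$: triple $(i,j,\ell)$ with $0\le i,j\le n-\ell$, $i\ne j$, entries $(i+k,j+k)=1$ for $0\le k<\ell$, entry $(i-1,j-1)=0$ if $\min\{i,j\}>0$, entry $(i+\ell,j+\ell)=0$ if $\max\{i,j\}<n-\ell$. $N_l$ = number of lines of length exactly $l$ (boundary lines included), $\lambda_l=N_l/(n^2-n)$, $\Lambda_\ell=\sum_{l\ge\ell}\lambda_l$, $\mathrm{RR}_\ell=\sum_{l\ge\ell}l\lambda_l$, average line length $\mathrm{L}_\ell=\mathrm{RR}_\ell/\Lambda_\ell$. *)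

theory Defs
  imports "HOL-Analysis.Analysis"
begin

text \<open>Bowen metric rho_l(y,z) = max_{0 <= i < l} dist (f^i y) (f^i z)  (meaningful for l >= 1).\<close>
definition bowen_dist :: "('a::metric_space \<Rightarrow> 'a) \<Rightarrow> nat \<Rightarrow> 'a \<Rightarrow> 'a \<Rightarrow> real" where
  "bowen_dist f l y z = Max ((\<lambda>i. dist ((f ^^ i) y) ((f ^^ i) z)) ` {..<l})"

definition corr_sum :: "('a::metric_space \<Rightarrow> 'a) \<Rightarrow> nat \<Rightarrow> 'a \<Rightarrow> nat \<Rightarrow> real \<Rightarrow> real" where
  "corr_sum f l x n \<epsilon> =
     real (card {(i, j). i < n \<and> j < n \<and> bowen_dist f l ((f ^^ i) x) ((f ^^ j) x) \<le> \<epsilon>})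
     / (real n) ^ 2"

definition rplot :: "('a::metric_space \<Rightarrow> 'a) \<Rightarrow> 'a \<Rightarrow> real \<Rightarrow> nat \<Rightarrow> nat \<Rightarrow> bool" where
  "rplot f x \<epsilon> i j \<longleftrightarrow> dist ((f ^^ i) x) ((f ^^ j) x) \<le> \<epsilon>"

definition is_line :: "('a::metric_space \<Rightarrow> 'a) \<Rightarrow> 'a \<Rightarrow> nat \<Rightarrow> real \<Rightarrow> nat \<Rightarrow> nat \<Rightarrow> nat \<Rightarrow> bool" where
  "is_line f x n \<epsilon> i j l \<longleftrightarrow>
     i + l \<le> n \<and> j + l \<le> n \<and> i \<noteq> j \<and>
     (\<forall>k<l. rplot f x \<epsilon> (i + k) (j + k)) \<and>
     (min i j > 0 \<longrightarrow> \<not> rplot f x \<epsilon> (i - 1) (j - 1)) \<and>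
     (max i j < n - l \<longrightarrow> \<not> rplot f x \<epsilon> (i + l) (j + l))"

definition num_lines :: "('a::metric_space \<Rightarrow> 'a) \<Rightarrow> 'a \<Rightarrow> nat \<Rightarrow> real \<Rightarrow> nat \<Rightarrow> nat" where
  "num_lines f x n \<epsilon> l = card {(i, j). i \<le> n \<and> j \<le> n \<and> is_line f x n \<epsilon> i j l}"

definition line_freq :: "('a::metric_space \<Rightarrow> 'a) \<Rightarrow> 'a \<Rightarrow> nat \<Rightarrow> real \<Rightarrow> nat \<Rightarrow> real" where
  "line_freq f x n \<epsilon> l = real (num_lines f x n \<epsilon> l) / ((real n) ^ 2 - real n)"

text \<open>Lambda_l = sum_{l' >= l} lambda_{l'}.  Lines have length at most n, so the
  sum over l' >= l equals the finite sum over l <= l' <= n.\<close>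
definition Lam :: "('a::metric_space \<Rightarrow> 'a) \<Rightarrow> nat \<Rightarrow> 'a \<Rightarrow> nat \<Rightarrow> real \<Rightarrow> real" where
  "Lam f l x n \<epsilon> = (\<Sum>l'\<in>{l..n}. line_freq f x n \<epsilon> l')"

definition RR :: "('a::metric_space \<Rightarrow> 'a) \<Rightarrow> nat \<Rightarrow> 'a \<Rightarrow> nat \<Rightarrow> real \<Rightarrow> real" where
  "RR f l x n \<epsilon> = (\<Sum>l'\<in>{l..n}. real l' * line_freq f x n \<epsilon> l')"

definition avg_len :: "('a::metric_space \<Rightarrow> 'a) \<Rightarrow> nat \<Rightarrow> 'a \<Rightarrow> nat \<Rightarrow> real \<Rightarrow> real" where
  "avg_len f l x n \<epsilon> = RR f l x n \<epsilon> / Lam f l x n \<epsilon>"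

end

theory Submission
  imports Defs
begin

text \<open>
  Write \<open>R\<close> for the recurrence relation \<open>rplot f x \<epsilon>\<close>. By the definition of the Bowen metric, a
  pair \<open>(i, j)\<close> contributes to \<open>C\<^sub>m\<close> iff \<open>R\<close> holds at the \<open>m\<close> diagonal positions
  \<open>(i + k, j + k)\<close>, \<open>k < m\<close>. Apart from the \<open>n\<close> pairs on the main diagonal, such runs either
  lie inside the \<open>n \<times> n\<close> plot (\<open>A\<^sub>m\<close> of them) or stick out of it (\<open>E\<^sub>m\<close>), so
  \<open>n\<^sup>2 C\<^sub>m = n + A\<^sub>m + E\<^sub>m\<close>. A line of length at least \<open>m\<close> is the same as an inner run of
  length \<open>m\<close> that cannot be prolonged backwards, and a run that can be prolonged is a
  shifted inner run of length \<open>m + 1\<close>; hence \<open>\<Sum>\<^bsub>L\<ge>m\<^esub> N\<^sub>L = A\<^sub>m - A\<^sub>m\<^sub>+\<^sub>1\<close>, and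
  telescoping gives \<open>\<Sum>\<^bsub>L\<ge>m\<^esub> L N\<^sub>L = m A\<^sub>m - (m - 1) A\<^sub>m\<^sub>+\<^sub>1\<close>. The error terms are
  differences of the \<open>E\<^sub>m\<close>, which are small because one index of an outer run lies
  in the last \<open>m - 1\<close> rows or columns.
\<close>

definition diag_run :: "(nat \<Rightarrow> nat \<Rightarrow> bool) \<Rightarrow> nat \<Rightarrow> nat \<Rightarrow> nat \<Rightarrow> bool" where
  "diag_run R m i j \<longleftrightarrow> (\<forall>k<m. R (i + k) (j + k))"

definition inner_runs :: "(nat \<Rightarrow> nat \<Rightarrow> bool) \<Rightarrow> nat \<Rightarrow> nat \<Rightarrow> (nat \<times> nat) set" where
  "inner_runs R n m = {(i, j). i + m \<le> n \<and> j + m \<le> n \<and> i \<noteq> j \<and> diag_run R m i j}"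

definition edge_runs :: "(nat \<Rightarrow> nat \<Rightarrow> bool) \<Rightarrow> nat \<Rightarrow> nat \<Rightarrow> (nat \<times> nat) set" where
  "edge_runs R n m =
     {(i, j). i < n \<and> j < n \<and> i \<noteq> j \<and> \<not> (i + m \<le> n \<and> j + m \<le> n) \<and> diag_run R m i j}"

definition run_starts :: "(nat \<Rightarrow> nat \<Rightarrow> bool) \<Rightarrow> nat \<Rightarrow> nat \<Rightarrow> (nat \<times> nat) set" where
  "run_starts R n m = {(i, j) \<in> inner_runs R n m. 0 < i \<and> 0 < j \<longrightarrow> \<not> R (i - 1) (j - 1)}"

lemma diag_run_Suc: "diag_run R (Suc m) i j \<longleftrightarrow> R i j \<and> diag_run R m (Suc i) (Suc j)"
  unfolding diag_run_def by (auto simp: less_Suc_eq_0_disj)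

lemma diag_run_Suc_last: "diag_run R (Suc m) i j \<longleftrightarrow> diag_run R m i j \<and> R (i + m) (j + m)"
  unfolding diag_run_def by (auto simp: less_Suc_eq)

lemma finite_inner_runs: "finite (inner_runs R n m)"
  by (rule finite_subset[of _ "{..n} \<times> {..n}"]) (auto simp: inner_runs_def)

lemma finite_offdiag: "finite {(i, j). i < n \<and> j < (n::nat) \<and> P i j}"
  by (rule finite_subset[of _ "{..<n} \<times> {..<n}"]) auto

lemma finite_edge_runs: "finite (edge_runs R n m)"
  unfolding edge_runs_def by (rule finite_offdiag)

lemma inner_runs_eq_empty: "n < m \<Longrightarrow> inner_runs R n m = {}"
  by (auto simp: inner_runs_def)

lemma card_diag_runs:
  assumes "\<And>i. R i i" and "1 \<le> m"
  shows "card {(i, j). i < n \<and> j < n \<and> diag_run R m i j}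
         = n + card (inner_runs R n m) + card (edge_runs R n m)"
proof -
  let ?D = "(\<lambda>i. (i, i)) ` {..<n}"
  have "{(i, j). i < n \<and> j < n \<and> diag_run R m i j} = ?D \<union> (inner_runs R n m \<union> edge_runs R n m)"
    using assms by (auto simp: diag_run_def inner_runs_def edge_runs_def)
  moreover have "card (?D \<union> (inner_runs R n m \<union> edge_runs R n m))
      = card ?D + (card (inner_runs R n m) + card (edge_runs R n m))"
    using finite_inner_runs finite_edge_runs
    by (subst card_Un_disjoint card_Un_disjoint; auto simp: inner_runs_def edge_runs_def)+
  moreover have "card ?D = n"
    by (simp add: card_image inj_on_def)
  ultimately show ?thesis by simp
qed

lemma card_run_starts:
  "card (run_starts R n m) + card (inner_runs R n (Suc m)) = card (inner_runs R n m)"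
proof -
  let ?shift = "\<lambda>(i, j). (Suc i, Suc j)"
  have split: "inner_runs R n m = run_starts R n m \<union> ?shift ` inner_runs R n (Suc m)"
  proof (intro equalityI subsetI)
    fix p assume p: "p \<in> inner_runs R n m"
    obtain i j where [simp]: "p = (i, j)" by fastforce
    show "p \<in> run_starts R n m \<union> ?shift ` inner_runs R n (Suc m)"
    proof (cases "p \<in> run_starts R n m")
      case False
      then have "(i - 1, j - 1) \<in> inner_runs R n (Suc m)" "0 < i" "0 < j"
        using p by (auto simp: run_starts_def inner_runs_def diag_run_Suc)
      then show ?thesis
        by (intro UnI2 image_eqI[of _ _ "(i - 1, j - 1)"]) auto
    qed simp
  qed (auto simp: run_starts_def inner_runs_def diag_run_Suc)
  have "card (?shift ` inner_runs R n (Suc m)) = card (inner_runs R n (Suc m))"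
    by (rule card_image) (auto simp: inj_on_def)
  moreover have "card (inner_runs R n m)
      = card (run_starts R n m) + card (?shift ` inner_runs R n (Suc m))"
    using finite_inner_runs[of R n m] unfolding split
    by (intro card_Un_disjoint) (auto simp: run_starts_def inner_runs_def diag_run_def)
  ultimately show ?thesis by simp
qed

lemma card_offdiag_touching_le:
  "card {(i, j). i < n \<and> j < n \<and> i \<noteq> j \<and> (i \<in> P \<or> j \<in> P)} \<le> 2 * (card (P \<inter> {..<n}) * (n - 1))"
proof -
  let ?S = "SIGMA i:P \<inter> {..<n}. {..<n} - {i}"
  have fin: "finite ?S" by auto
  have "{(i, j). i < n \<and> j < n \<and> i \<noteq> j \<and> (i \<in> P \<or> j \<in> P)} \<subseteq> ?S \<union> prod.swap ` ?S"
  proof (intro subsetI)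
    fix p assume "p \<in> {(i, j). i < n \<and> j < n \<and> i \<noteq> j \<and> (i \<in> P \<or> j \<in> P)}"
    then obtain i j where p: "p = (i, j)" "i < n" "j < n" "i \<noteq> j" "i \<in> P \<or> j \<in> P"
      by blast
    then have "(i, j) \<in> ?S \<or> (j, i) \<in> ?S" by auto
    then show "p \<in> ?S \<union> prod.swap ` ?S"
      using p(1) by (auto intro: image_eqI[of _ _ "(j, i)"])
  qed
  then have "card {(i, j). i < n \<and> j < n \<and> i \<noteq> j \<and> (i \<in> P \<or> j \<in> P)} \<le> card (?S \<union> prod.swap ` ?S)"
    using fin by (intro card_mono) auto
  also have "\<dots> \<le> card ?S + card (prod.swap ` ?S)"
    by (rule card_Un_le)
  also have "card (prod.swap ` ?S) = card ?S"
    by (simp add: card_image)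
  also have "card ?S = card (P \<inter> {..<n}) * (n - 1)"
    by (simp add: card_SigmaI)
  finally show ?thesis by simp
qed

lemma card_edge_runs_le: "card (edge_runs R n m) \<le> 2 * ((m - 1) * (n - 1))"
proof -
  let ?P = "{Suc n - m..<n}"
  have "edge_runs R n m \<subseteq> {(i, j). i < n \<and> j < n \<and> i \<noteq> j \<and> (i \<in> ?P \<or> j \<in> ?P)}"
    unfolding edge_runs_def by (intro subsetI, clarify) (simp, linarith)
  then have "card (edge_runs R n m) \<le> card {(i, j). i < n \<and> j < n \<and> i \<noteq> j \<and> (i \<in> ?P \<or> j \<in> ?P)}"
    by (intro card_mono finite_offdiag)
  also have "\<dots> \<le> 2 * (card (?P \<inter> {..<n}) * (n - 1))"
    by (rule card_offdiag_touching_le)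
  also have "card (?P \<inter> {..<n}) \<le> m - 1"
    by (simp add: Int_absorb2 subset_eq)
  finally show ?thesis by simp
qed

lemma card_edge_runs_Suc_le: "card (edge_runs R n (Suc m)) \<le> card (edge_runs R n m) + 2 * (n - 1)"
proof -
  let ?M = "{(i, j). i < n \<and> j < n \<and> i \<noteq> j \<and> (i \<in> {n - m} \<or> j \<in> {n - m})}"
  have "edge_runs R n (Suc m) \<subseteq> edge_runs R n m \<union> ?M"
    unfolding edge_runs_def diag_run_Suc_last by (intro subsetI, clarify) auto
  then have "card (edge_runs R n (Suc m)) \<le> card (edge_runs R n m \<union> ?M)"
    using finite_edge_runs finite_offdiag by (intro card_mono) auto
  also have "\<dots> \<le> card (edge_runs R n m) + card ?M"
    by (rule card_Un_le)
  also have "card ?M \<le> 2 * (card ({n - m} \<inter> {..<n}) * (n - 1))"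
    by (rule card_offdiag_touching_le)
  also have "\<dots> \<le> 2 * (n - 1)"
    by (cases "n - m < n") auto
  finally show ?thesis by simp
qed

lemma is_line_unique:
  assumes "is_line f x n \<epsilon> i j L1" and "is_line f x n \<epsilon> i j L2"
  shows "L1 = L2"
proof -
  have "\<not> L1 < L2" if "is_line f x n \<epsilon> i j L1" "is_line f x n \<epsilon> i j L2" for L1 L2
  proof
    assume "L1 < L2"
    with that(2) have "rplot f x \<epsilon> (i + L1) (j + L1)" and "max i j < n - L1"
      unfolding is_line_def by auto
    with that(1) show False
      unfolding is_line_def by blast
  qed
  with assms show ?thesis by (meson linorder_neqE_nat)
qed

lemma maximal_inner_run:
  assumes "(i, j) \<in> inner_runs R n m"
  obtains L where "m \<le> L" "(i, j) \<in> inner_runs R n L" "(i, j) \<notin> inner_runs R n (Suc L)"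
proof -
  obtain L where L: "(i, j) \<in> inner_runs R n L"
    and greatest: "\<And>L'. (i, j) \<in> inner_runs R n L' \<Longrightarrow> L' \<le> L"
  proof -
    have "\<forall>L. (i, j) \<in> inner_runs R n L \<longrightarrow> L \<le> n"
      by (simp add: inner_runs_def)
    then show ?thesis
      using Nat.ex_has_greatest_nat[of "\<lambda>L. (i, j) \<in> inner_runs R n L" m n] assms that by blast
  qed
  show thesis
    using that[OF greatest[OF assms] L] greatest[of "Suc L"] by auto
qed

lemma lines_of_length_ge:
  assumes "1 \<le> m"
  shows "{(i, j). \<exists>L\<in>{m..n}. i \<le> n \<and> j \<le> n \<and> is_line f x n \<epsilon> i j L} = run_starts (rplot f x \<epsilon>) n m"
proof (intro equalityI subsetI)
  fix p assume "p \<in> {(i, j). \<exists>L\<in>{m..n}. i \<le> n \<and> j \<le> n \<and> is_line f x n \<epsilon> i j L}"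
  then show "p \<in> run_starts (rplot f x \<epsilon>) n m"
    using assms by (auto simp: is_line_def run_starts_def inner_runs_def diag_run_def)
next
  fix p assume p: "p \<in> run_starts (rplot f x \<epsilon>) n m"
  obtain i j where [simp]: "p = (i, j)" by fastforce
  from p have "(i, j) \<in> inner_runs (rplot f x \<epsilon>) n m"
    by (simp add: run_starts_def)
  then obtain L where "m \<le> L" and run: "(i, j) \<in> inner_runs (rplot f x \<epsilon>) n L"
    and maximal: "(i, j) \<notin> inner_runs (rplot f x \<epsilon>) n (Suc L)"
    by (rule maximal_inner_run)
  have "\<not> rplot f x \<epsilon> (i + L) (j + L)" if "max i j < n - L"
    using run maximal that by (auto simp: inner_runs_def diag_run_Suc_last)
  then have "is_line f x n \<epsilon> i j L"
    using p run by (auto simp: is_line_def run_starts_def inner_runs_def diag_run_def)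
  moreover have "L \<le> n"
    using run by (simp add: inner_runs_def)
  ultimately show "p \<in> {(i, j). \<exists>L\<in>{m..n}. i \<le> n \<and> j \<le> n \<and> is_line f x n \<epsilon> i j L}"
    using \<open>m \<le> L\<close> run by (auto simp: inner_runs_def)
qed

lemma sum_num_lines:
  assumes "1 \<le> m"
  shows "(\<Sum>L\<in>{m..n}. num_lines f x n \<epsilon> L) + card (inner_runs (rplot f x \<epsilon>) n (Suc m))
         = card (inner_runs (rplot f x \<epsilon>) n m)"
proof -
  let ?lines = "\<lambda>L. {(i, j). i \<le> n \<and> j \<le> n \<and> is_line f x n \<epsilon> i j L}"
  have "(\<Sum>L\<in>{m..n}. num_lines f x n \<epsilon> L) = card (\<Union>L\<in>{m..n}. ?lines L)"
    unfolding num_lines_def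
  proof (rule card_UN_disjoint[symmetric])
    have "finite (?lines L)" for L
      by (rule finite_subset[of _ "{..n} \<times> {..n}"]) auto
    then show "\<forall>L\<in>{m..n}. finite (?lines L)" by blast
    show "\<forall>L\<in>{m..n}. \<forall>L'\<in>{m..n}. L \<noteq> L' \<longrightarrow> ?lines L \<inter> ?lines L' = {}"
      using is_line_unique by blast
  qed simp
  also have "(\<Union>L\<in>{m..n}. ?lines L) = run_starts (rplot f x \<epsilon>) n m"
    unfolding lines_of_length_ge[OF assms, symmetric] by auto
  finally show ?thesis
    by (simp add: card_run_starts)
qed

lemma sum_length_num_lines:
  assumes "1 \<le> m"
  shows "(\<Sum>L\<in>{m..n}. real L * real (num_lines f x n \<epsilon> L))
         = real m * card (inner_runs (rplot f x \<epsilon>) n m)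
           - (real m - 1) * card (inner_runs (rplot f x \<epsilon>) n (Suc m))"
proof (cases "m \<le> Suc n")
  case True
  define A where "A k = real (card (inner_runs (rplot f x \<epsilon>) n k))" for k
  have tail: "real (\<Sum>L\<in>{k..n}. num_lines f x n \<epsilon> L) = A k - A (Suc k)" if "1 \<le> k" for k
    using arg_cong[OF sum_num_lines[OF that, where f = f and x = x and n = n and \<epsilon> = \<epsilon>], of real]
    unfolding A_def of_nat_add by linarith
  from True show ?thesis
    unfolding A_def[symmetric]
  proof (induction rule: inc_induct)
    case base
    then show ?case by (simp add: A_def inner_runs_eq_empty)
  next
    case (step k)
    then have "1 \<le> k" "k \<le> n" using assms by auto
    have N_k: "real (num_lines f x n \<epsilon> k) = A k - 2 * A (Suc k) + A (Suc (Suc k))"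
      using tail[of k] tail[of "Suc k"] sum.atLeast_Suc_atMost[OF \<open>k \<le> n\<close>, of "num_lines f x n \<epsilon>"]
        \<open>1 \<le> k\<close> by simp
    have "(\<Sum>L\<in>{k..n}. real L * real (num_lines f x n \<epsilon> L))
        = real k * real (num_lines f x n \<epsilon> k) + (\<Sum>L\<in>{Suc k..n}. real L * real (num_lines f x n \<epsilon> L))"
      by (rule sum.atLeast_Suc_atMost[OF \<open>k \<le> n\<close>])
    also have "\<dots> = real k * real (num_lines f x n \<epsilon> k) + (real (Suc k) * A (Suc k) - real k * A (Suc (Suc k)))"
      using step.IH by simp
    also have "\<dots> = real k * A k - (real k - 1) * A (Suc k)"
      unfolding N_k by (simp add: algebra_simps)
    finally show ?case .
  qed
qed (simp add: inner_runs_eq_empty)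

lemma edge_runs_real_bounds:
  assumes "1 \<le> m" and "1 \<le> n"
  shows "real (card (edge_runs R n m)) \<le> 2 * (real m - 1) * (real n - 1)"
    and "real (card (edge_runs R n (Suc m))) \<le> real (card (edge_runs R n m)) + 2 * (real n - 1)"
proof -
  have "real (card (edge_runs R n m)) \<le> real (2 * ((m - 1) * (n - 1)))"
    using card_edge_runs_le of_nat_mono by blast
  also have "\<dots> = 2 * (real m - 1) * (real n - 1)"
    using assms by (simp add: of_nat_diff)
  finally show "real (card (edge_runs R n m)) \<le> 2 * (real m - 1) * (real n - 1)" .
  have "real (card (edge_runs R n (Suc m))) \<le> real (card (edge_runs R n m) + 2 * (n - 1))"
    using card_edge_runs_Suc_le of_nat_mono by blast
  then show "real (card (edge_runs R n (Suc m))) \<le> real (card (edge_runs R n m)) + 2 * (real n - 1)"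
    using assms by (simp add: of_nat_diff)
qed

lemma abs_edge_runs_Suc_diff_le:
  assumes "1 \<le> m" and "1 \<le> n"
  shows "\<bar>real (card (edge_runs R n (Suc m))) - card (edge_runs R n m)\<bar> \<le> 2 * real m * (real n - 1)"
  using edge_runs_real_bounds[OF assms, of R] edge_runs_real_bounds[of "Suc m" n R] assms
  by (simp add: algebra_simps)

lemma abs_edge_runs_weighted_diff_le:
  assumes "1 \<le> m" and "1 \<le> n"
  shows "\<bar>(real m - 1) * card (edge_runs R n (Suc m)) - real m * card (edge_runs R n m)\<bar>
         \<le> 2 * real m * (real m - 1) * (real n - 1)"
proof -
  define e0 where "e0 = real (card (edge_runs R n m))"
  define e1 where "e1 = real (card (edge_runs R n (Suc m)))"
  define p where "p = (real m - 1) * (real n - 1)"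
  have e0: "0 \<le> e0" "e0 \<le> 2 * p" and e1: "0 \<le> e1" "e1 \<le> e0 + 2 * (real n - 1)"
    using edge_runs_real_bounds[OF assms, of R] by (simp_all add: e0_def e1_def p_def algebra_simps)
  have "0 \<le> p"
    using assms by (simp add: p_def)
  then have "p \<le> real m * p"
    using assms by (simp add: mult_le_cancel_right1)
  have "(real m - 1) * e1 \<le> (real m - 1) * (e0 + 2 * (real n - 1))"
    using assms e1 by (intro mult_left_mono) auto
  moreover have "(real m - 1) * (e0 + 2 * (real n - 1)) = real m * e0 - e0 + 2 * p"
    by (simp add: p_def algebra_simps)
  moreover have "real m * e0 \<le> real m * (2 * p)" and "0 \<le> (real m - 1) * e1"
    using assms e0 e1 by (simp_all add: mult_left_mono)
  ultimately have "\<bar>(real m - 1) * e1 - real m * e0\<bar> \<le> 2 * real m * p"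
    using \<open>p \<le> real m * p\<close> e0 by (simp add: abs_le_iff algebra_simps)
  then show ?thesis
    by (simp add: e0_def e1_def p_def mult.assoc)
qed

lemma bowen_dist_le_iff:
  assumes "1 \<le> m"
  shows "bowen_dist f m y z \<le> \<epsilon> \<longleftrightarrow> (\<forall>k<m. dist ((f ^^ k) y) ((f ^^ k) z) \<le> \<epsilon>)"
  unfolding bowen_dist_def using assms by (subst Max_le_iff) (auto simp: lessThan_empty_iff)

lemma corr_sum_eq_runs:
  assumes "1 \<le> m" and "0 \<le> \<epsilon>"
  shows "corr_sum f m x n \<epsilon>
         = (real n + card (inner_runs (rplot f x \<epsilon>) n m) + card (edge_runs (rplot f x \<epsilon>) n m)) / (real n)\<^sup>2"
proof -
  have "bowen_dist f m ((f ^^ i) x) ((f ^^ j) x) \<le> \<epsilon> \<longleftrightarrow> diag_run (rplot f x \<epsilon>) m i j" for i j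
    using assms(1) by (simp add: bowen_dist_le_iff diag_run_def rplot_def funpow_add add.commute)
  then have "card {(i, j). i < n \<and> j < n \<and> bowen_dist f m ((f ^^ i) x) ((f ^^ j) x) \<le> \<epsilon>}
      = n + card (inner_runs (rplot f x \<epsilon>) n m) + card (edge_runs (rplot f x \<epsilon>) n m)"
    using card_diag_runs[of "rplot f x \<epsilon>" m n] assms by (simp add: rplot_def)
  then show ?thesis
    unfolding corr_sum_def by simp
qed

lemma Lam_eq_runs:
  assumes "1 \<le> l"
  shows "Lam f l x n \<epsilon>
         = (real (card (inner_runs (rplot f x \<epsilon>) n l)) - card (inner_runs (rplot f x \<epsilon>) n (Suc l)))
           / ((real n)\<^sup>2 - real n)"
  using arg_cong[OF sum_num_lines[OF assms, where f = f and x = x and n = n and \<epsilon> = \<epsilon>], of real]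
  unfolding Lam_def line_freq_def
  by (simp add: sum_divide_distrib[symmetric] eq_diff_eq)

lemma RR_eq_runs:
  assumes "1 \<le> l"
  shows "RR f l x n \<epsilon>
         = (real l * card (inner_runs (rplot f x \<epsilon>) n l) - (real l - 1) * card (inner_runs (rplot f x \<epsilon>) n (Suc l)))
           / ((real n)\<^sup>2 - real n)"
  using sum_length_num_lines[OF assms, where f = f and x = x and n = n and \<epsilon> = \<epsilon>]
  unfolding RR_def line_freq_def
  by (simp add: sum_divide_distrib[symmetric])

lemma Lam_eq_corr_sum:
  assumes "1 \<le> l" and "2 \<le> n" and "0 \<le> \<epsilon>"
  shows "Lam f l x n \<epsilon>
         = real n / (real n - 1) * (corr_sum f l x n \<epsilon> - corr_sum f (l + 1) x n \<epsilon>)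
           + (real (card (edge_runs (rplot f x \<epsilon>) n (Suc l))) - card (edge_runs (rplot f x \<epsilon>) n l))
             / (real n * (real n - 1))"
proof -
  have "(a0 - a1) / (N * (N - 1))
      = N / (N - 1) * ((N + a0 + e0) / N\<^sup>2 - (N + a1 + e1) / N\<^sup>2) + (e1 - e0) / (N * (N - 1))"
    if "1 < N" for N a0 a1 e0 e1 :: real
    using that by (simp add: divide_simps) (simp add: algebra_simps power2_eq_square)
  moreover have "(real n)\<^sup>2 - real n = real n * (real n - 1)"
    by (simp add: power2_eq_square algebra_simps)
  ultimately show ?thesis
    using assms by (simp add: Lam_eq_runs corr_sum_eq_runs)
qed

lemma RR_eq_corr_sum:
  assumes "1 \<le> l" and "2 \<le> n" and "0 \<le> \<epsilon>"
  shows "RR f l x n \<epsilon>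
         = real n / (real n - 1) * (real l * corr_sum f l x n \<epsilon> - (real l - 1) * corr_sum f (l + 1) x n \<epsilon>)
           - 1 / (real n - 1)
           + ((real l - 1) * card (edge_runs (rplot f x \<epsilon>) n (Suc l)) - real l * card (edge_runs (rplot f x \<epsilon>) n l))
             / (real n * (real n - 1))"
proof -
  have "(L * a0 - (L - 1) * a1) / (N * (N - 1))
      = N / (N - 1) * (L * ((N + a0 + e0) / N\<^sup>2) - (L - 1) * ((N + a1 + e1) / N\<^sup>2))
        - 1 / (N - 1) + ((L - 1) * e1 - L * e0) / (N * (N - 1))"
    if "1 < N" for N L a0 a1 e0 e1 :: real
    using that by (simp add: divide_simps) (simp add: algebra_simps power2_eq_square)
  moreover have "(real n)\<^sup>2 - real n = real n * (real n - 1)"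
    by (simp add: power2_eq_square algebra_simps)
  ultimately show ?thesis
    using assms by (simp add: RR_eq_runs corr_sum_eq_runs)
qed

lemma abs_divide_mult_pred_le:
  fixes a c N :: real
  assumes "\<bar>a\<bar> \<le> c * (N - 1)" and "1 < N"
  shows "\<bar>a / (N * (N - 1))\<bar> \<le> c / N"
proof -
  have "\<bar>a / (N * (N - 1))\<bar> = \<bar>a\<bar> / (N * (N - 1))"
    using assms(2) by (simp add: abs_divide)
  also have "\<dots> \<le> c * (N - 1) / (N * (N - 1))"
    using assms by (intro divide_right_mono) auto
  also have "\<dots> = c / N"
    using assms(2) by simp
  finally show ?thesis .
qed

theorem mainTheorem8:
  fixes f :: "'a::metric_space \<Rightarrow> 'a" and x :: 'a and l n :: nat and \<epsilon> :: real
  assumes "continuous_on UNIV f"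
    and "l \<ge> 1"
    and "n \<ge> 2"
    and "\<epsilon> > 0"
  shows "\<exists>\<delta>N. Lam f l x n \<epsilon> =
              real n / (real n - 1) * (corr_sum f l x n \<epsilon> - corr_sum f (l + 1) x n \<epsilon>) + \<delta>N
            \<and> \<bar>\<delta>N\<bar> \<le> 2 * real l / real n
            \<and> (Lam f l x n \<epsilon> > 0 \<longrightarrow>
                 (\<exists>\<delta>RR. \<bar>\<delta>RR\<bar> \<le> 2 * real l * (real l - 1) / real n
                   \<and> avg_len f l x n \<epsilon> =
                      (real n / (real n - 1) * (real l * corr_sum f l x n \<epsilon>
                           - (real l - 1) * corr_sum f (l + 1) x n \<epsilon>)
                        - 1 / (real n - 1) + \<delta>RR)
                      / (real n / (real n - 1) * (corr_sum f l x n \<epsilon> - corr_sum f (l + 1) x n \<epsilon>)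
                        + \<delta>N)))"
proof -
  let ?E = "\<lambda>m. real (card (edge_runs (rplot f x \<epsilon>) n m))"
  define \<delta>N where "\<delta>N = (?E (Suc l) - ?E l) / (real n * (real n - 1))"
  define \<delta>RR where "\<delta>RR = ((real l - 1) * ?E (Suc l) - real l * ?E l) / (real n * (real n - 1))"
  have n: "1 \<le> n" "1 < real n" and "0 \<le> \<epsilon>"
    using assms by auto
  have Lam: "Lam f l x n \<epsilon> = real n / (real n - 1) * (corr_sum f l x n \<epsilon> - corr_sum f (l + 1) x n \<epsilon>) + \<delta>N"
    unfolding \<delta>N_def using Lam_eq_corr_sum[OF assms(2,3) \<open>0 \<le> \<epsilon>\<close>] .
  have RR: "RR f l x n \<epsilon> = real n / (real n - 1) * (real l * corr_sum f l x n \<epsilon>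
      - (real l - 1) * corr_sum f (l + 1) x n \<epsilon>) - 1 / (real n - 1) + \<delta>RR"
    unfolding \<delta>RR_def using RR_eq_corr_sum[OF assms(2,3) \<open>0 \<le> \<epsilon>\<close>] .
  have "\<bar>\<delta>N\<bar> \<le> 2 * real l / real n"
    unfolding \<delta>N_def by (rule abs_divide_mult_pred_le[OF abs_edge_runs_Suc_diff_le[OF assms(2) n(1)] n(2)])
  moreover have "\<bar>\<delta>RR\<bar> \<le> 2 * real l * (real l - 1) / real n"
    unfolding \<delta>RR_def by (rule abs_divide_mult_pred_le[OF abs_edge_runs_weighted_diff_le[OF assms(2) n(1)] n(2)])
  moreover have "avg_len f l x n \<epsilon>
      = (real n / (real n - 1) * (real l * corr_sum f l x n \<epsilon> - (real l - 1) * corr_sum f (l + 1) x n \<epsilon>)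
          - 1 / (real n - 1) + \<delta>RR)
        / (real n / (real n - 1) * (corr_sum f l x n \<epsilon> - corr_sum f (l + 1) x n \<epsilon>) + \<delta>N)"
    unfolding avg_len_def RR Lam ..
  ultimately show ?thesis
    using Lam by (intro exI[of _ \<delta>N] conjI impI exI[of _ \<delta>RR])
qed

end
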